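(* Let $\lambda_1\ge0$ and $\lambda_2=0$, let $P_n$ be the monic polynomials orthogonal with respect to $\langle f,g\rangle_F=\int_{\mathbb R}fg\,e^{-x^4}dx$ and $Q_n$ the monic polynomials orthogonal with respect to $\langle f,g\rangle_S=\int_{\mathbb R}fg\,e^{-x^4}dx+\lambda_1f(0)g(0)$. Then every $Q_n$ has all its zeros real and simple, and for $n\ge3$ the positive zeros of $Q_n$ interlace with the positive zeros of $P_n$.
   Context: Both $P_n$ and $Q_n$ have the parity of $n$, so they have the same number $m=\lfloor n/2\rfloor$ of positive zeros. If $0<x_1<\dots<x_m$ are the positive zeros of $P_n$ and $0<y_1<\dots<y_m$ those of $Q_n$, "interlace" means that either $y_1\le x_1\le y_2\le x_2\le\dots\le y_m\le x_m$ or $x_1\le y_1\le x_2\le y_2\le\dots\le x_m\le y_m$. *)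

theory Defs
  imports "HOL-Analysis.Analysis" "HOL-Computational_Algebra.Polynomial"
begin

definition freud_ip :: "real poly \<Rightarrow> real poly \<Rightarrow> real" where
  "freud_ip p q = (\<integral>x. poly p x * poly q x * exp (- (x ^ 4)) \<partial>lborel)"

definition sobolev_ip :: "real \<Rightarrow> real poly \<Rightarrow> real poly \<Rightarrow> real" where
  "sobolev_ip lam1 p q = freud_ip p q + lam1 * poly p 0 * poly q 0"

definition monic_OPS :: "(real poly \<Rightarrow> real poly \<Rightarrow> real) \<Rightarrow> (nat \<Rightarrow> real poly) \<Rightarrow> bool" where
  "monic_OPS ip P \<longleftrightarrow>
     (\<forall>n. degree (P n) = n \<and> lead_coeff (P n) = 1 \<and>
          (\<forall>q. degree q < n \<longrightarrow> ip (P n) q = 0))"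

definition pos_zeros :: "real poly \<Rightarrow> real list" where
  "pos_zeros p = sorted_list_of_set {x. 0 < x \<and> poly p x = 0}"

definition interlace :: "real list \<Rightarrow> real list \<Rightarrow> bool" where
  "interlace xs ys \<longleftrightarrow> length xs = length ys \<and>
     ((\<forall>i<length xs. ys ! i \<le> xs ! i \<and> (Suc i < length xs \<longrightarrow> xs ! i \<le> ys ! Suc i)) \<or>
      (\<forall>i<length xs. xs ! i \<le> ys ! i \<and> (Suc i < length xs \<longrightarrow> ys ! i \<le> xs ! Suc i)))"

end

theory Submission
  imports Defs "HOL-Probability.Distributions"
begin

text \<open>Both inner products are given by positive functionals on real polynomials that are invariant
  under x \<mapsto> -x. Hence the monic orthogonal polynomials have n real simple zeros (multiplying by
  the factors at the zeros of odd multiplicity would otherwise give a constant-sign polynomial of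
  degree < 2n orthogonal to itself), are even or odd, and admit Gauss quadrature with positive
  weights. For odd n, Q_n vanishes at 0, so it is also Freud-orthogonal and equals P_n. For even n,
  D = Q_n - P_n has degree < n and is Freud-orthogonal to x times every polynomial of degree
  \<le> n - 2; the quadrature at the zeros of P_n applied to D x \<Prod>(x - r), the product over all other
  zeros r, shows that D, hence Q_n, has opposite signs at any two consecutive positive zeros of P_n.
  So each such gap contains an odd number of zeros of Q_n, and since both have the same number
  of positive zeros, they interlace.\<close>

section \<open>Polynomials with prescribed simple roots\<close>

text \<open>Keep products with the linear factors [:-r, 1:] intact instead of expanding them.\<close>
declare mult_pCons_left [simp del] mult_pCons_right [simp del]

definition roots_poly :: "'a::comm_ring_1 set \<Rightarrow> 'a poly" where
  "roots_poly R = (\<Prod>r\<in>R. [:-r, 1:])"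

lemma poly_roots_poly: "poly (roots_poly R) x = (\<Prod>r\<in>R. x - r)"
  unfolding roots_poly_def by (simp add: poly_prod)

lemma roots_poly_nonzero [simp]: "roots_poly R \<noteq> (0 :: 'a::idom poly)"
  unfolding roots_poly_def by (cases "finite R") (auto simp: prod_zero_iff)

lemma degree_roots_poly: "finite R \<Longrightarrow> degree (roots_poly R :: 'a::idom poly) = card R"
  unfolding roots_poly_def by (subst degree_prod_eq_sum_degree) auto

lemma lead_coeff_roots_poly [simp]: "lead_coeff (roots_poly R :: 'a::idom poly) = 1"
  unfolding roots_poly_def by (simp add: lead_coeff_prod)

lemma poly_roots_poly_eq_0_iff:
  "finite R \<Longrightarrow> poly (roots_poly R) x = (0 :: 'a::idom) \<longleftrightarrow> x \<in> R"
  by (simp add: poly_roots_poly)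

lemma roots_poly_insert:
  "finite R \<Longrightarrow> r \<notin> R \<Longrightarrow> roots_poly (insert r R) = [:-r, 1:] * roots_poly R"
  by (simp add: roots_poly_def)

lemma roots_poly_dvd:
  fixes p :: "'a::idom poly"
  assumes "finite R" "\<And>r. r \<in> R \<Longrightarrow> poly p r = 0"
  shows "roots_poly R dvd p"
  using assms
proof (induction R rule: finite_induct)
  case empty
  then show ?case by (simp add: roots_poly_def)
next
  case (insert r R)
  then obtain g where g: "p = roots_poly R * g" by (auto elim: dvdE)
  have "poly (roots_poly R) r \<noteq> 0" "poly p r = 0"
    using insert by (simp_all add: poly_roots_poly_eq_0_iff)
  with g have "poly g r = 0" by simp
  then obtain h where "g = [:-r, 1:] * h" by (metis dvdE poly_eq_0_iff_dvd)
  with g insert show ?case by (simp add: roots_poly_insert ac_simps)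
qed

lemma order_roots_poly:
  fixes a :: "'a::idom"
  assumes "finite R"
  shows "order a (roots_poly R) = (if a \<in> R then 1 else 0)"
proof (cases "a \<in> R")
  case True
  have "roots_poly R = [:-a, 1:] * roots_poly (R - {a})"
    using assms True by (metis insert_Diff finite_Diff roots_poly_insert Diff_iff singletonI)
  moreover have "order a (roots_poly (R - {a})) = 0"
    using assms by (intro order_0I) (simp add: poly_roots_poly_eq_0_iff)
  ultimately show ?thesis
    using True order_power_n_n[of a 1] by (simp add: order_mult)
next
  case False
  then show ?thesis using assms by (simp add: order_0I poly_roots_poly_eq_0_iff)
qed

lemma map_poly_of_real_roots_poly:
  assumes "finite R"
  shows "map_poly of_real (roots_poly R) = (roots_poly (of_real ` R) :: 'a::{real_algebra_1,idom} poly)"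
  using assms
proof (induction R rule: finite_induct)
  case empty
  then show ?case by (simp add: roots_poly_def)
next
  case (insert r R)
  have lin: "map_poly of_real ([:-r, 1:] * p) = [:- of_real r, 1:] * (map_poly of_real p :: 'a poly)" for p
    by (intro poly_eqI) (simp add: coeff_map_poly mult_pCons_left coeff_pCons split: nat.split)
  have "of_real r \<notin> (of_real ` R :: 'a set)" using insert by auto
  with insert show ?case by (simp add: roots_poly_insert lin)
qed

lemma roots_poly_sign_between:
  fixes S :: "real set"
  assumes "finite S" "a \<notin> S" "b \<notin> S" "a < b"
  shows "0 < (-1) ^ card {r\<in>S. a < r \<and> r < b} * (poly (roots_poly S) a * poly (roots_poly S) b)"
  using assms
proof (induction S rule: finite_induct)
  case empty
  then show ?case by (simp add: roots_poly_def)
next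
  case (insert r S)
  let ?k = "card {r\<in>S. a < r \<and> r < b}"
  let ?Y = "poly (roots_poly S) a * poly (roots_poly S) b"
  have IH: "0 < (-1) ^ ?k * ?Y"
    using insert by simp
  have prod: "poly (roots_poly (insert r S)) a * poly (roots_poly (insert r S)) b
      = ((a - r) * (b - r)) * ?Y"
    using insert by (simp add: poly_roots_poly)
  show ?case
  proof (cases "a < r \<and> r < b")
    case True
    then have "{r'\<in>insert r S. a < r' \<and> r' < b} = insert r {r\<in>S. a < r \<and> r < b}"
      by auto
    then have card: "card {r'\<in>insert r S. a < r' \<and> r' < b} = Suc ?k"
      using insert by simp
    have "0 < - ((a - r) * (b - r)) * ((-1) ^ ?k * ?Y)"
      by (rule mult_pos_pos) (use True IH in \<open>simp_all add: mult_neg_pos\<close>)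
    also have "\<dots> = (-1) ^ Suc ?k * ((a - r) * (b - r) * ?Y)"
      by simp
    finally show ?thesis
      unfolding prod card .
  next
    case False
    then have "0 < (a - r) * (b - r)"
      using insert.prems by (cases "r < a") (auto intro: mult_neg_neg)
    then have "0 < (a - r) * (b - r) * ((-1) ^ ?k * ?Y)"
      using IH by (rule mult_pos_pos)
    moreover have "{r'\<in>insert r S. a < r' \<and> r' < b} = {r\<in>S. a < r \<and> r < b}"
      using False by auto
    ultimately show ?thesis
      unfolding prod by (simp add: ac_simps)
  qed
qed

lemma poly_sign_constant_if_no_root:
  fixes p :: "real poly"
  assumes "\<And>x. poly p x \<noteq> 0"
  shows "(\<forall>x. 0 \<le> poly p x) \<or> (\<forall>x. poly p x \<le> 0)"
proof (rule ccontr)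
  assume "\<not> ?thesis"
  then obtain a b where a: "poly p a < 0" and b: "0 < poly p b"
    by (auto simp: not_le)
  then consider "a < b" | "b < a"
    by (metis less_asym linorder_neqE)
  then show False
    by cases (use poly_IVT_pos[OF _ a b] poly_IVT_neg[OF _ b a] assms in blast)+
qed

text \<open>Multiplying by the simple factors of the roots of odd multiplicity kills all sign changes.\<close>
lemma roots_poly_mult_sign_constant:
  fixes p :: "real poly"
  assumes "p \<noteq> 0"
  shows "\<exists>R. finite R \<and> (\<forall>r\<in>R. poly p r = 0) \<and>
           ((\<forall>x. 0 \<le> poly (p * roots_poly R) x) \<or> (\<forall>x. poly (p * roots_poly R) x \<le> 0))"
  using assms
proof (induction "degree p" arbitrary: p rule: less_induct)
  case less
  show ?case
  proof (cases "\<exists>r. poly p r = 0")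
    case False
    then show ?thesis
      using poly_sign_constant_if_no_root[of p] by (intro exI[of _ "{}"]) (auto simp: roots_poly_def)
  next
    case True
    then obtain r q where r: "poly p r = 0" and q: "p = [:-r, 1:] * q"
      by (metis dvdE poly_eq_0_iff_dvd)
    have "q \<noteq> 0"
      using q less.prems by auto
    moreover have "degree q < degree p"
      using q \<open>q \<noteq> 0\<close> by (simp add: degree_mult_eq)
    ultimately obtain R where R: "finite R" "\<forall>r\<in>R. poly q r = 0"
      "(\<forall>x. 0 \<le> poly (q * roots_poly R) x) \<or> (\<forall>x. poly (q * roots_poly R) x \<le> 0)"
      using less.hyps by blast
    have roots: "\<forall>r'\<in>R. poly p r' = 0"
      using R(2) q by simp
    show ?thesis
    proof (cases "r \<in> R")
      case True
      then have "roots_poly R = [:-r, 1:] * roots_poly (R - {r})"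
        using R(1) by (metis insert_Diff finite_Diff roots_poly_insert Diff_iff singletonI)
      then have "p * roots_poly (R - {r}) = q * roots_poly R"
        using q by (simp add: ac_simps)
      then show ?thesis
        using R roots by (intro exI[of _ "R - {r}"]) auto
    next
      case False
      have "poly (p * roots_poly (insert r R)) x = (x - r)\<^sup>2 * poly (q * roots_poly R) x" for x
        using q False R(1) by (simp add: roots_poly_insert power2_eq_square ac_simps)
      then have "(\<forall>x. 0 \<le> poly (p * roots_poly (insert r R)) x) \<or>
                 (\<forall>x. poly (p * roots_poly (insert r R)) x \<le> 0)"
        using R(3) by (auto intro: mult_nonneg_nonneg mult_nonneg_nonpos)
      then show ?thesis
        using R roots r by (intro exI[of _ "insert r R"]) auto
    qed
  qed
qed

lemma degree_diff_monic_less: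
  fixes p q :: "'a::comm_ring_1 poly"
  assumes "degree p = n" "degree q = n" "lead_coeff p = 1" "lead_coeff q = 1" "p \<noteq> q"
  shows "degree (p - q) < n"
proof -
  have "degree (p - q) \<le> n" "coeff (p - q) n = 0"
    using assms degree_diff_le[of p n q] by simp_all
  moreover have "p - q \<noteq> 0"
    using assms(5) by simp
  ultimately show ?thesis
    by (metis le_neq_implies_less leading_coeff_0_iff)
qed

lemma odd_card_roots_between:
  fixes S :: "real set"
  assumes "finite S" "a < b" "poly (roots_poly S) a * poly (roots_poly S) b < 0"
  shows "odd (card {r\<in>S. a < r \<and> r < b})"
proof
  assume "even (card {r\<in>S. a < r \<and> r < b})"
  moreover have "a \<notin> S" "b \<notin> S"
    using assms(3) poly_roots_poly_eq_0_iff[OF assms(1)] by (metis mult_zero_left mult_zero_right less_irrefl)+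
  ultimately show False
    using roots_poly_sign_between[OF assms(1) _ _ assms(2)] assms(3) by simp
qed

lemma roots_poly_same_sign:
  fixes S :: "real set"
  assumes "finite S" "a \<notin> S" "b \<notin> S" "a < b" "\<And>r. r \<in> S \<Longrightarrow> \<not> (a < r \<and> r < b)"
  shows "0 < poly (roots_poly S) a * poly (roots_poly S) b"
proof -
  have "{r\<in>S. a < r \<and> r < b} = {}"
    using assms(5) by auto
  then show ?thesis
    using roots_poly_sign_between[OF assms(1-4)] by (simp only: card.empty power_0 mult_1)
qed

lemma symmetric_if_roots_poly_even:
  fixes R :: "real set"
  assumes "finite R" "\<And>x. poly (roots_poly R) (-x) = poly (roots_poly R) x" "r \<in> R"
  shows "-r \<in> R"
  using assms poly_roots_poly_eq_0_iff[OF assms(1)] by metis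

lemma card_symmetric_set:
  fixes S :: "real set"
  assumes "finite S" "\<And>r. r \<in> S \<Longrightarrow> -r \<in> S" "0 \<notin> S"
  shows "card S = 2 * card {r\<in>S. 0 < r}"
proof -
  let ?P = "{r\<in>S. 0 < r}"
  have "S = ?P \<union> uminus ` ?P"
  proof safe
    fix x assume "x \<in> S" "x \<notin> uminus ` ?P"
    then show "0 < x"
      using assms(2,3) by (cases x "0::real" rule: linorder_cases) force+
  qed (use assms(2) in auto)
  moreover have "card (uminus ` ?P) = card ?P"
    by (rule card_image) (simp add: inj_on_def)
  moreover have "?P \<inter> uminus ` ?P = {}"
    by auto
  ultimately show ?thesis
    using assms(1) by (metis (no_types, lifting) card_Un_disjoint finite_Un mult_2)
qed

lemma zero_notin_symmetric_set:
  fixes S :: "real set"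
  assumes "finite S" "\<And>r. r \<in> S \<Longrightarrow> -r \<in> S" "even (card S)"
  shows "0 \<notin> S"
proof
  assume "0 \<in> S"
  then have "card S = Suc (card (S - {0}))"
    using assms(1) by (intro card_Suc_Diff1[symmetric])
  moreover have "card (S - {0}) = 2 * card {r\<in>S - {0}. 0 < r}"
    by (rule card_symmetric_set) (use assms in auto)
  ultimately show False
    using assms(3) by simp
qed

lemma pos_zeros_roots_poly: "finite R \<Longrightarrow> pos_zeros (roots_poly R) = sorted_list_of_set {r\<in>R. 0 < r}"
  unfolding pos_zeros_def by (simp add: poly_roots_poly_eq_0_iff conj_commute)

definition lagrange_interp :: "'a::field set \<Rightarrow> ('a \<Rightarrow> 'a) \<Rightarrow> 'a poly" where
  "lagrange_interp R f =
     (\<Sum>a\<in>R. smult (f a / poly (roots_poly (R - {a})) a) (roots_poly (R - {a})))"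

lemma poly_lagrange_interp:
  assumes "finite R" "r \<in> R"
  shows "poly (lagrange_interp R f) r = f r"
proof -
  have "poly (lagrange_interp R f) r
      = (\<Sum>a\<in>R. f a / poly (roots_poly (R - {a})) a * poly (roots_poly (R - {a})) r)"
    unfolding lagrange_interp_def by (simp add: poly_sum)
  also have "\<dots> = f r / poly (roots_poly (R - {r})) r * poly (roots_poly (R - {r})) r"
    using assms by (intro sum.remove[THEN trans]) (auto intro!: sum.neutral simp: poly_roots_poly_eq_0_iff)
  also have "\<dots> = f r"
    using assms(1) by (simp add: poly_roots_poly_eq_0_iff)
  finally show ?thesis .
qed

lemma degree_lagrange_interp:
  assumes "finite R" "R \<noteq> {}"
  shows "degree (lagrange_interp R f) < card R"
proof -
  have "degree (lagrange_interp R f) \<le> card R - 1"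
    unfolding lagrange_interp_def using assms(1)
    by (intro degree_sum_le order.trans[OF degree_smult_le]) (simp_all add: degree_roots_poly)
  moreover have "0 < card R"
    using assms by (simp add: card_gt_0_iff)
  ultimately show ?thesis
    by linarith
qed

section \<open>Interlacing of sorted lists\<close>

lemma nth_less_iff_less_card:
  fixes ys :: "'a::linorder list"
  assumes "sorted_wrt (<) ys" "j < length ys"
  shows "ys ! j < t \<longleftrightarrow> j < card {y\<in>set ys. y < t}"
  using assms
proof (induction ys arbitrary: j)
  case Nil
  then show ?case by simp
next
  case (Cons y ys)
  show ?case
  proof (cases "y < t")
    case True
    then have "{z\<in>set (y # ys). z < t} = insert y {z\<in>set ys. z < t}" and "y \<notin> set ys"
      using Cons.prems(1) by auto
    then show ?thesis
      using Cons by (cases j) auto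
  next
    case False
    then have "{z\<in>set (y # ys). z < t} = {}"
      using Cons.prems(1) by auto
    moreover have "\<not> (y # ys) ! j < t"
    proof (cases j)
      case (Suc k)
      then have "y < ys ! k"
        using Cons.prems by (simp add: nth_mem)
      then show ?thesis
        using False Suc by simp
    qed (use False in simp)
    ultimately show ?thesis
      by (simp only: card.empty) simp
  qed
qed

lemma interlace_refl: "sorted xs \<Longrightarrow> interlace xs xs"
  unfolding interlace_def by (auto simp: sorted_iff_nth_mono)

lemma sorted_wrt_nth_Suc_no_between:
  fixes xs :: "'a::linorder list"
  assumes "sorted_wrt (<) xs" "Suc i < length xs" "x \<in> set xs"
  shows "\<not> (xs ! i < x \<and> x < xs ! Suc i)"
proof -
  obtain j where j: "j < length xs" "x = xs ! j"
    using assms(3) by (metis in_set_conv_nth)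
  show ?thesis
  proof (cases "j \<le> i")
    case True
    then show ?thesis
      using sorted_wrt_nth_less[OF assms(1), of j i] assms(2) j by (cases "j = i") auto
  next
    case False
    then show ?thesis
      using sorted_wrt_nth_less[OF assms(1), of "Suc i" j] j by (cases "j = Suc i") auto
  qed
qed

text \<open>The excess N i - N 0 - i is even and nondecreasing, and the bound forces it to stay 0.\<close>
lemma unit_increments_if_odd_and_bounded:
  fixes N :: "nat \<Rightarrow> nat"
  assumes odd_step: "\<And>i. Suc i < m \<Longrightarrow> N i < N (Suc i) \<and> odd (N (Suc i) - N i)"
    and "0 < m" and bound: "N (m - 1) \<le> m"
  shows "N 0 \<le> 1" and "\<And>i. i < m \<Longrightarrow> N i = N 0 + i"
proof -
  define e where "e i = int (N i) - int (N 0) - int i" for i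
  have e_step: "e i \<le> e (Suc i) \<and> even (e (Suc i) - e i)" if "Suc i < m" for i
  proof -
    have "e (Suc i) - e i = int (N (Suc i) - N i - 1)" "even (N (Suc i) - N i - 1)"
      using odd_step[OF that] unfolding e_def by (simp_all add: of_nat_diff)
    then show ?thesis
      by simp
  qed
  have e_mono: "e j \<le> e k" if "j \<le> k" "k < m" for j k
    using that
  proof (induction k)
    case (Suc k)
    show ?case
    proof (cases "j = Suc k")
      case False
      then have "e j \<le> e k"
        using Suc by (simp add: le_Suc_eq)
      then show ?thesis
        using e_step[OF Suc.prems(2)] by linarith
    qed simp
  qed simp
  have e_even: "even (e k)" if "k < m" for k
    using that
  proof (induction k)
    case (Suc k)
    then show ?case using e_step[of k] by (metis Suc_lessD even_add diff_add_cancel)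
  qed (simp add: e_def)
  have "e (m - 1) \<le> 1 - int (N 0)"
    using bound \<open>0 < m\<close> unfolding e_def by linarith
  moreover have "e 0 \<le> e (m - 1)" "even (e (m - 1))"
    using e_mono[of 0 "m - 1"] e_even[of "m - 1"] \<open>0 < m\<close> by auto
  moreover have "e 0 = 0"
    by (simp add: e_def)
  ultimately have e_last: "e (m - 1) = 0" and N0: "N 0 \<le> 1"
    by presburger+
  from N0 show "N 0 \<le> 1" .
  show "N i = N 0 + i" if "i < m" for i
  proof -
    have "e 0 \<le> e i" "e i \<le> e (m - 1)"
      using that by (auto intro: e_mono)
    then show ?thesis
      using \<open>e 0 = 0\<close> e_last unfolding e_def by linarith
  qed
qed

text \<open>With N i the number of ys below xs ! i, every increment N (i + 1) - N i is odd.\<close>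
lemma interlace_if_odd_between:
  fixes xs ys :: "real list"
  assumes sx: "sorted_wrt (<) xs" and sy: "sorted_wrt (<) ys" and len: "length ys = length xs"
    and odd_between: "\<And>i. Suc i < length xs \<Longrightarrow> odd (card {y\<in>set ys. xs ! i \<le> y \<and> y < xs ! Suc i})"
  shows "interlace xs ys"
proof (cases "xs = []")
  case True
  then show ?thesis
    using len unfolding interlace_def by simp
next
  case False
  define m where "m = length xs"
  define N where "N i = card {y\<in>set ys. y < xs ! i}" for i
  have "N (Suc i) = N i + card {y\<in>set ys. xs ! i \<le> y \<and> y < xs ! Suc i}" if "Suc i < m" for i
  proof -
    have "xs ! i < xs ! Suc i"
      using sx that unfolding m_def by (simp add: sorted_wrt_nth_less)
    then have "{y\<in>set ys. y < xs ! Suc i}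
        = {y\<in>set ys. y < xs ! i} \<union> {y\<in>set ys. xs ! i \<le> y \<and> y < xs ! Suc i}"
      by auto
    moreover have "{y\<in>set ys. y < xs ! i} \<inter> {y\<in>set ys. xs ! i \<le> y \<and> y < xs ! Suc i} = {}"
      by auto
    ultimately show ?thesis
      unfolding N_def by (simp add: card_Un_disjoint)
  qed
  then have odd_step: "N i < N (Suc i) \<and> odd (N (Suc i) - N i)" if "Suc i < m" for i
    using odd_between[of i] that unfolding m_def by (auto intro: odd_pos)
  have "N (m - 1) \<le> card (set ys)"
    unfolding N_def by (intro card_mono) auto
  also have "\<dots> \<le> m"
    using len card_length unfolding m_def by metis
  finally have "N (m - 1) \<le> m" .
  moreover have "0 < m"
    using False unfolding m_def by simp
  ultimately have N0: "N 0 \<le> 1" and "\<And>i. i < m \<Longrightarrow> N i = N 0 + i"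
    using unit_increments_if_odd_and_bounded[of m N, OF odd_step] by blast+
  then have below: "ys ! j < xs ! i \<longleftrightarrow> j < N 0 + i" if "i < m" "j < m" for i j
    using nth_less_iff_less_card[OF sy, of j "xs ! i"] that len unfolding N_def m_def by simp
  consider "N 0 = 1" | "N 0 = 0"
    using N0 by linarith
  then show ?thesis
  proof cases
    case 1
    have "ys ! i \<le> xs ! i \<and> (Suc i < m \<longrightarrow> xs ! i \<le> ys ! Suc i)" if "i < m" for i
      using below[of i i] below[of i "Suc i"] that 1 by (simp add: not_less)
    then show ?thesis unfolding interlace_def m_def using len by simp
  next
    case 2
    have "xs ! i \<le> ys ! i \<and> (Suc i < m \<longrightarrow> ys ! i \<le> xs ! Suc i)" if "i < m" for i
      using below[of i i] below[of "Suc i" i] that 2 by (auto simp: not_less)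
    then show ?thesis unfolding interlace_def m_def using len by simp
  qed
qed

section \<open>The Freud weight\<close>

lemma integrable_monomial_freud_weight:
  "integrable lborel (\<lambda>x::real. x ^ k * exp (- (x ^ 4)))"
proof (rule Bochner_Integration.integrable_bound)
  show "integrable lborel (\<lambda>x. (exp (1/16) * sqrt (2*pi)) * (std_normal_density x * \<bar>x\<bar>^k))"
    by (intro integrable_mult_right integrable_std_normal_moment_abs)
  show "(\<lambda>x::real. x ^ k * exp (- (x ^ 4))) \<in> borel_measurable lborel"
    by simp
  show "AE x in lborel. norm (x ^ k * exp (- (x ^ 4)))
      \<le> norm ((exp (1/16) * sqrt (2*pi)) * (std_normal_density x * \<bar>x\<bar>^k))"
  proof (rule AE_I2)
    fix x :: real
    text \<open>x ^ 4 \<ge> x ^ 2 / 2 - 1/16, so the weight is dominated by a multiple of the Gaussian.\<close>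
    have "0 \<le> (x\<^sup>2 - 1/4)\<^sup>2"
      by simp
    then have "exp (- (x ^ 4)) \<le> exp (1/16) * exp (- x\<^sup>2 / 2)"
      by (simp add: exp_add[symmetric] power2_eq_square algebra_simps power4_eq_xxxx)
    then have "\<bar>x\<bar>^k * exp (- (x ^ 4)) \<le> \<bar>x\<bar>^k * (exp (1/16) * exp (- x\<^sup>2 / 2))"
      by (intro mult_left_mono) simp_all
    then show "norm (x ^ k * exp (- (x ^ 4)))
        \<le> norm ((exp (1/16) * sqrt (2*pi)) * (std_normal_density x * \<bar>x\<bar>^k))"
      by (simp add: std_normal_density_def abs_mult power_abs ac_simps)
  qed
qed

lemma integrable_poly_freud_weight:
  "integrable lborel (\<lambda>x::real. poly p x * exp (- (x ^ 4)))"
proof -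
  have "(\<lambda>x::real. poly p x * exp (- (x ^ 4)))
      = (\<lambda>x. \<Sum>i\<le>degree p. coeff p i * (x ^ i * exp (- (x ^ 4))))"
    by (simp add: poly_altdef sum_distrib_right mult.assoc)
  then show ?thesis
    by (simp add: integrable_monomial_freud_weight)
qed

definition freud_integral :: "real poly \<Rightarrow> real" where
  "freud_integral p = (\<integral>x. poly p x * exp (- (x ^ 4)) \<partial>lborel)"

lemma freud_ip_eq: "freud_ip p q = freud_integral (p * q)"
  unfolding freud_ip_def freud_integral_def by (simp add: ac_simps)

lemma freud_integral_add: "freud_integral (p + q) = freud_integral p + freud_integral q"
  unfolding freud_integral_def by (simp add: distrib_right integrable_poly_freud_weight)

lemma freud_integral_smult: "freud_integral (smult c p) = c * freud_integral p"
  unfolding freud_integral_def by (simp add: mult.assoc)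

lemma freud_integral_pos:
  assumes nonneg: "\<And>x. 0 \<le> poly p x" and "p \<noteq> 0"
  shows "0 < freud_integral p"
proof -
  have "freud_integral p \<noteq> 0"
  proof
    assume "freud_integral p = 0"
    then have "AE x in lborel. poly p x * exp (- (x ^ 4)) = 0"
      using integral_nonneg_eq_0_iff_AE[OF integrable_poly_freud_weight] nonneg
      unfolding freud_integral_def by simp
    then have "AE x in lborel. x \<in> {x. poly p x = 0}"
      by simp
    moreover have "AE x in lborel. x \<notin> {x. poly p x = 0}"
      using poly_roots_finite[OF \<open>p \<noteq> 0\<close>] by (intro AE_discrete_difference countable_finite) auto
    ultimately have "AE x in (lborel :: real measure). False"
      by eventually_elim simp
    then show False
      by (simp add: eventually_False ae_filter_eq_bot_iff)
  qed
  moreover have "0 \<le> freud_integral p"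
    unfolding freud_integral_def by (intro integral_nonneg_AE AE_I2) (simp add: nonneg)
  ultimately show ?thesis
    by simp
qed

lemma freud_integral_reflect: "freud_integral (pcompose p [:0, -1:]) = freud_integral p"
  using lborel_integral_real_affine[of "-1" "\<lambda>x. poly p x * exp (- (x ^ 4))" 0]
  unfolding freud_integral_def by (simp add: poly_pcompose)

section \<open>Symmetric positive functionals\<close>

locale symmetric_positive_functional =
  fixes F :: "real poly \<Rightarrow> real"
  assumes F_add: "F (p + q) = F p + F q"
    and F_smult: "F (smult c p) = c * F p"
    and F_pos: "(\<And>x. 0 \<le> poly p x) \<Longrightarrow> p \<noteq> 0 \<Longrightarrow> 0 < F p"
    and F_reflect: "F (pcompose p [:0, -1:]) = F p"
begin

lemma F_zero: "F 0 = 0"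
  using F_smult[of 0 0] by simp

lemma F_diff: "F (p - q) = F p - F q"
  using F_add[of p "-q"] F_smult[of "-1" q] by simp

lemma F_sum: "F (\<Sum>i\<in>S. f i) = (\<Sum>i\<in>S. F (f i))"
  by (induction S rule: infinite_finite_induct) (auto simp: F_zero F_add)

lemma F_neg: "(\<And>x. poly p x \<le> 0) \<Longrightarrow> p \<noteq> 0 \<Longrightarrow> F p < 0"
  using F_pos[of "-p"] F_smult[of "-1" p] by simp

lemma F_square_pos: "p \<noteq> 0 \<Longrightarrow> 0 < F (p * p)"
  by (rule F_pos) auto

definition monic_orth :: "nat \<Rightarrow> real poly \<Rightarrow> bool" where
  "monic_orth n A \<longleftrightarrow> degree A = n \<and> lead_coeff A = 1 \<and> (\<forall>q. degree q < n \<longrightarrow> F (A * q) = 0)"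

lemma monic_OPS_iff_monic_orth: "monic_OPS (\<lambda>p q. F (p * q)) P \<longleftrightarrow> (\<forall>n. monic_orth n (P n))"
  unfolding monic_OPS_def monic_orth_def by simp

lemma card_roots_if_monic_orth: "monic_orth n (roots_poly R) \<Longrightarrow> finite R \<Longrightarrow> card R = n"
  unfolding monic_orth_def by (simp add: degree_roots_poly)

lemma monic_orth_unique:
  assumes A: "monic_orth n A" and B: "monic_orth n B"
  shows "A = B"
proof (rule ccontr)
  assume "A \<noteq> B"
  with A B have "degree (A - B) < n"
    unfolding monic_orth_def by (blast intro: degree_diff_monic_less)
  with A B have "F (A * (A - B)) = 0" "F (B * (A - B)) = 0"
    unfolding monic_orth_def by blast+
  then have "F ((A - B) * (A - B)) = 0"
    by (simp add: left_diff_distrib F_diff)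
  moreover have "0 < F ((A - B) * (A - B))"
    using \<open>A \<noteq> B\<close> by (simp add: F_square_pos)
  ultimately show False
    by simp
qed

text \<open>Multiplying A by the factors at its roots of odd multiplicity gives a polynomial of constant
  sign, so F does not vanish on it; by orthogonality there must be at least n such roots.\<close>
lemma monic_orth_eq_roots_poly:
  assumes A: "monic_orth n A"
  obtains R where "finite R" "card R = n" "A = roots_poly R"
proof -
  have "A \<noteq> 0"
    using A unfolding monic_orth_def by auto
  then obtain R where R: "finite R" "\<forall>r\<in>R. poly A r = 0"
     "(\<forall>x. 0 \<le> poly (A * roots_poly R) x) \<or> (\<forall>x. poly (A * roots_poly R) x \<le> 0)"
    using roots_poly_mult_sign_constant by metis
  have "A * roots_poly R \<noteq> 0"
    using \<open>A \<noteq> 0\<close> by simp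
  with R(3) have "F (A * roots_poly R) \<noteq> 0"
    by (metis F_neg F_pos less_irrefl)
  have "n \<le> card R"
  proof (rule ccontr)
    assume "\<not> n \<le> card R"
    then have "degree (roots_poly R) < n"
      using R(1) by (simp add: degree_roots_poly)
    with A \<open>F (A * roots_poly R) \<noteq> 0\<close> show False
      unfolding monic_orth_def by blast
  qed
  obtain g where g: "A = roots_poly R * g"
    using roots_poly_dvd[OF R(1)] R(2) by (blast elim: dvdE)
  with \<open>A \<noteq> 0\<close> have "g \<noteq> 0"
    by auto
  then have "degree A = card R + degree g"
    unfolding g using R(1) by (simp add: degree_mult_eq degree_roots_poly)
  with A \<open>n \<le> card R\<close> have "card R = n" "degree g = 0"
    unfolding monic_orth_def by auto
  moreover obtain c where "g = [:c:]"
    using \<open>degree g = 0\<close> by (rule degree_eq_zeroE)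
  moreover have "lead_coeff g = 1"
    using g A unfolding monic_orth_def by (simp add: lead_coeff_mult)
  ultimately have "g = 1"
    by (simp add: one_pCons)
  with that g R(1) \<open>card R = n\<close> show ?thesis
    by simp
qed

lemma monic_orth_reflect:
  assumes A: "monic_orth n A"
  shows "pcompose A [:0, -1:] = smult ((-1) ^ n) A"
proof -
  let ?r = "[:0, -1::real:]"
  let ?A' = "smult ((-1) ^ n) (pcompose A ?r)"
  have "pcompose ?r ?r = [:0, 1:]"
    by (simp add: pcompose_pCons mult_pCons_left)
  then have reflect_twice: "pcompose (pcompose q ?r) ?r = q" for q :: "real poly"
    by (simp add: pcompose_assoc[symmetric] pcompose_idR)
  have "monic_orth n ?A'"
    unfolding monic_orth_def
  proof (intro conjI allI impI)
    have "degree (pcompose A ?r) = n"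
      using A unfolding monic_orth_def by (simp add: degree_pcompose)
    moreover have "lead_coeff (pcompose A ?r) = (-1) ^ n"
      using A unfolding monic_orth_def by (subst lead_coeff_comp) auto
    ultimately show "degree ?A' = n" "lead_coeff ?A' = 1"
      by (simp_all add: power_mult_distrib[symmetric])
    fix q :: "real poly"
    assume "degree q < n"
    have "?A' * q = smult ((-1) ^ n) (pcompose (A * pcompose q ?r) ?r)"
      by (simp add: pcompose_mult reflect_twice)
    then have "F (?A' * q) = (-1) ^ n * F (A * pcompose q ?r)"
      by (simp add: F_smult F_reflect)
    also have "F (A * pcompose q ?r) = 0"
      using A \<open>degree q < n\<close> unfolding monic_orth_def by (simp add: degree_pcompose)
    finally show "F (?A' * q) = 0"
      by simp
  qed
  then have "?A' = A"
    using A monic_orth_unique by blast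
  then have "smult ((-1) ^ n) ?A' = smult ((-1) ^ n) A"
    by simp
  then show ?thesis
    by (simp add: power_mult_distrib[symmetric])
qed

lemma monic_orth_parity: "monic_orth n A \<Longrightarrow> poly A (-x) = (-1) ^ n * poly A x"
  using arg_cong[OF monic_orth_reflect, of n A "\<lambda>p. poly p x"] by (simp add: poly_pcompose)

lemma monic_orth_complex_roots:
  assumes "monic_orth n A" "poly (map_poly complex_of_real A) z = 0"
  shows "Im z = 0 \<and> order z (map_poly complex_of_real A) = 1"
proof -
  obtain R where R: "finite R" "A = roots_poly R"
    using monic_orth_eq_roots_poly[OF assms(1)] by blast
  then have complex_A: "map_poly complex_of_real A = roots_poly (complex_of_real ` R)"
    by (simp add: map_poly_of_real_roots_poly)
  with assms(2) R(1) have "z \<in> complex_of_real ` R"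
    by (simp add: poly_roots_poly_eq_0_iff)
  with R(1) show ?thesis
    unfolding complex_A by (auto simp: order_roots_poly)
qed

definition gauss_weight :: "real set \<Rightarrow> real \<Rightarrow> real" where
  "gauss_weight R a = F (roots_poly (R - {a})) / poly (roots_poly (R - {a})) a"

lemma gauss_quadrature:
  assumes A: "monic_orth n (roots_poly R)" and fin: "finite R" and df: "degree f < 2 * n"
  shows "F f = (\<Sum>a\<in>R. poly f a * gauss_weight R a)"
proof -
  have card: "card R = n"
    using A fin by (rule card_roots_if_monic_orth)
  with df have "R \<noteq> {}"
    by auto
  define g where "g = f - lagrange_interp R (poly f)"
  have "roots_poly R dvd g"
    unfolding g_def using fin by (intro roots_poly_dvd) (simp_all add: poly_lagrange_interp)
  then obtain h where h: "g = roots_poly R * h"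
    by (elim dvdE)
  have "F g = 0"
  proof (cases "h = 0")
    case False
    have "degree g < 2 * n"
      unfolding g_def using df degree_lagrange_interp[OF fin \<open>R \<noteq> {}\<close>, of "poly f"] card
      by (intro le_less_trans[OF degree_diff_le_max]) auto
    then have "degree h < n"
      using h False card fin by (simp add: degree_mult_eq degree_roots_poly)
    then show ?thesis
      using A h unfolding monic_orth_def by blast
  qed (simp add: h F_zero)
  then have "F f = F (lagrange_interp R (poly f))"
    unfolding g_def by (simp add: F_diff)
  also have "\<dots> = (\<Sum>a\<in>R. poly f a * gauss_weight R a)"
    unfolding lagrange_interp_def gauss_weight_def by (simp add: F_sum F_smult)
  finally show ?thesis .
qed

text \<open>Apply the quadrature to the square of the polynomial vanishing exactly on R - {a}.\<close>
lemma gauss_weight_pos: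
  assumes A: "monic_orth n (roots_poly R)" and fin: "finite R" and a: "a \<in> R"
  shows "0 < gauss_weight R a"
proof -
  let ?q = "roots_poly (R - {a})"
  have "card R = n"
    using A fin by (rule card_roots_if_monic_orth)
  moreover have "0 < card R"
    using fin a card_gt_0_iff by blast
  ultimately have "degree (?q * ?q) < 2 * n"
    using fin a by (simp add: degree_mult_eq degree_roots_poly)
  then have "F (?q * ?q) = (\<Sum>b\<in>R. poly (?q * ?q) b * gauss_weight R b)"
    by (rule gauss_quadrature[OF A fin])
  also have "\<dots> = poly (?q * ?q) a * gauss_weight R a"
    using fin a by (intro sum.remove[THEN trans]) (auto intro!: sum.neutral simp: poly_roots_poly_eq_0_iff)
  finally have "0 < (poly ?q a)\<^sup>2 * gauss_weight R a"
    using F_square_pos[of ?q] by (simp add: power2_eq_square)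
  then show ?thesis
    by (simp add: zero_less_mult_iff)
qed

text \<open>Quadrature applied to D x l, where l vanishes on all nodes except a and b.\<close>
lemma orth_x_quadrature_pair:
  assumes A: "monic_orth n (roots_poly R)" and fin: "finite R"
    and orth: "\<And>s. degree s \<le> n - 2 \<Longrightarrow> F (D * ([:0, 1:] * s)) = 0" and dD: "degree D < n"
    and ab: "a \<in> R" "b \<in> R" "a \<noteq> b"
  defines "l \<equiv> roots_poly (R - {a, b})"
  shows "poly D a * (a * poly l a * gauss_weight R a) + poly D b * (b * poly l b * gauss_weight R b) = 0"
proof -
  have "card R = n"
    using A fin by (rule card_roots_if_monic_orth)
  then have dl: "degree l = n - 2"
    unfolding l_def using fin ab by (simp add: degree_roots_poly card_Diff_subset)
  have "degree (D * ([:0, 1:] * l)) < 2 * n"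
    using dD dl degree_mult_le[of D "[:0, 1:] * l"] degree_mult_le[of "[:0, 1:]" l] by simp
  then have "F (D * ([:0, 1:] * l)) = (\<Sum>r\<in>R. poly (D * ([:0, 1:] * l)) r * gauss_weight R r)"
    by (rule gauss_quadrature[OF A fin])
  also have "\<dots> = (\<Sum>r\<in>{a, b}. poly (D * ([:0, 1:] * l)) r * gauss_weight R r)"
    using fin ab unfolding l_def
    by (intro sum.mono_neutral_right) (auto simp: poly_roots_poly_eq_0_iff)
  finally show ?thesis
    using orth[OF dl[THEN eq_imp_le]] ab(3) by (simp add: algebra_simps)
qed

lemma orth_x_nonzero_at_roots:
  assumes A: "monic_orth n (roots_poly R)" and fin: "finite R"
    and orth: "\<And>s. degree s \<le> n - 2 \<Longrightarrow> F (D * ([:0, 1:] * s)) = 0" and dD: "degree D < n"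
    and "D \<noteq> 0" "0 \<notin> R" "r \<in> R"
  shows "poly D r \<noteq> 0"
proof
  assume "poly D r = 0"
  have "poly D c = 0" if "c \<in> R" for c
  proof (cases "c = r")
    case False
    text \<open>The pair identity for r and c leaves a single term with nonzero cofactor.\<close>
    have "c * poly (roots_poly (R - {r, c})) c * gauss_weight R c \<noteq> 0"
      using fin that \<open>0 \<notin> R\<close> gauss_weight_pos[OF A fin that] by (auto simp: poly_roots_poly_eq_0_iff)
    then show ?thesis
      using orth_x_quadrature_pair[OF A fin orth dD \<open>r \<in> R\<close> that] False \<open>poly D r = 0\<close> by simp
  qed (use \<open>poly D r = 0\<close> in simp)
  then have "roots_poly R dvd D"
    using fin by (intro roots_poly_dvd)
  then have "degree (roots_poly R) \<le> degree D"
    using \<open>D \<noteq> 0\<close> by (rule dvd_imp_degree_le)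
  with A dD show False
    unfolding monic_orth_def by simp
qed

lemma orth_x_sign_change:
  assumes A: "monic_orth n (roots_poly R)" and fin: "finite R"
    and orth: "\<And>s. degree s \<le> n - 2 \<Longrightarrow> F (D * ([:0, 1:] * s)) = 0" and dD: "degree D < n"
    and "D \<noteq> 0" "0 \<notin> R"
    and ab: "a \<in> R" "b \<in> R" "0 < a" "a < b" and no_root_between: "\<And>r. r \<in> R \<Longrightarrow> \<not> (a < r \<and> r < b)"
  shows "poly D a * poly D b < 0"
proof -
  define l where "l = roots_poly (R - {a, b})"
  define u where "u = a * poly l a * gauss_weight R a"
  define v where "v = b * poly l b * gauss_weight R b"
  have "poly D a * u = - (poly D b * v)"
    unfolding u_def v_def l_def eq_neg_iff_add_eq_0 using ab
    by (intro orth_x_quadrature_pair[OF A fin orth dD]) auto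
  then have product: "(poly D a * poly D b) * (u * v) = - (poly D b * v)\<^sup>2"
    by (metis (no_types) mult.commute mult.left_commute mult_minus_left power2_eq_square)
  have "0 < poly l a * poly l b"
    unfolding l_def using fin ab no_root_between by (intro roots_poly_same_sign) auto
  moreover have "u * v = (a * b) * (poly l a * poly l b) * (gauss_weight R a * gauss_weight R b)"
    unfolding u_def v_def by (simp add: ac_simps)
  ultimately have "0 < u * v"
    using ab gauss_weight_pos[OF A fin] by simp
  moreover have "poly D b \<noteq> 0"
    using orth_x_nonzero_at_roots[OF A fin orth dD] assms(5,6) ab by blast
  ultimately have "(poly D a * poly D b) * (u * v) < 0"
    using product by auto
  then show ?thesis
    using mult_less_cancel_right_pos[OF \<open>0 < u * v\<close>, of _ 0] by simp
qed

lemma monic_orth_even_roots: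
  assumes "monic_orth n (roots_poly R)" "finite R" "even n"
  shows "\<And>r. r \<in> R \<Longrightarrow> -r \<in> R" and "0 \<notin> R"
proof -
  show sym: "-r \<in> R" if "r \<in> R" for r
    using monic_orth_parity[OF assms(1)] assms(2,3) that by (intro symmetric_if_roots_poly_even) auto
  have "card R = n"
    using assms(1,2) by (rule card_roots_if_monic_orth)
  then show "0 \<notin> R"
    using zero_notin_symmetric_set[OF assms(2) sym] assms(3) by blast
qed

lemma odd_roots_between_consecutive_pos_roots:
  assumes A: "monic_orth n A" "A = roots_poly RA" "finite RA" "0 \<notin> RA"
    and B: "B = roots_poly RB" "finite RB" "degree B = n" "B \<noteq> A"
    and orth: "\<And>s. degree s \<le> n - 2 \<Longrightarrow> F ((B - A) * ([:0, 1:] * s)) = 0"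
    and ab: "a \<in> RA" "b \<in> RA" "0 < a" "a < b" and no_root_between: "\<And>r. r \<in> RA \<Longrightarrow> \<not> (a < r \<and> r < b)"
  shows "a \<notin> RB" and "odd (card {r\<in>RB. a < r \<and> r < b})"
proof -
  have "degree A = n" "lead_coeff A = 1"
    using A(1) unfolding monic_orth_def by blast+
  moreover have "lead_coeff B = 1"
    unfolding B(1) by simp
  ultimately have "degree (B - A) < n"
    using B(3,4) by (intro degree_diff_monic_less) auto
  then have "poly (B - A) a * poly (B - A) b < 0"
    using A B ab no_root_between by (intro orth_x_sign_change[OF A(1)[unfolded A(2)] A(3) orth]) auto
  moreover have "poly A a = 0" "poly A b = 0"
    using ab A(2,3) by (simp_all add: poly_roots_poly_eq_0_iff)
  ultimately have "poly (roots_poly RB) a * poly (roots_poly RB) b < 0"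
    unfolding B(1)[symmetric] by simp
  then show "odd (card {r\<in>RB. a < r \<and> r < b})" and "a \<notin> RB"
    using odd_card_roots_between[OF B(2) ab(4)] poly_roots_poly_eq_0_iff[OF B(2), of a] by auto
qed

lemma pos_zeros_interlace:
  assumes A: "monic_orth n A" and "even n"
    and G: "symmetric_positive_functional G" "symmetric_positive_functional.monic_orth G n B"
    and orth: "\<And>s. degree s \<le> n - 2 \<Longrightarrow> F ((B - A) * ([:0, 1:] * s)) = 0"
  shows "interlace (pos_zeros A) (pos_zeros B)"
proof (cases "A = B")
  case True
  then show ?thesis
    by (simp add: interlace_refl pos_zeros_def)
next
  case False
  interpret G: symmetric_positive_functional G
    by (fact G(1))
  obtain RA where RA: "finite RA" "card RA = n" "A = roots_poly RA"
    using monic_orth_eq_roots_poly[OF A] by blast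
  obtain RB where RB: "finite RB" "card RB = n" "B = roots_poly RB"
    using G.monic_orth_eq_roots_poly[OF G(2)] by blast
  note symA = monic_orth_even_roots[OF A[unfolded RA(3)] RA(1) \<open>even n\<close>]
  note symB = G.monic_orth_even_roots[OF G(2)[unfolded RB(3)] RB(1) \<open>even n\<close>]
  define xs where "xs = sorted_list_of_set {r\<in>RA. 0 < r}"
  define ys where "ys = sorted_list_of_set {r\<in>RB. 0 < r}"
  have set_xs: "set xs = {r\<in>RA. 0 < r}" and set_ys: "set ys = {r\<in>RB. 0 < r}"
    unfolding xs_def ys_def using RA(1) RB(1) by simp_all
  have sorted: "sorted_wrt (<) xs" "sorted_wrt (<) ys"
    unfolding xs_def ys_def by (simp_all add: strict_sorted_list_of_set)
  have "length ys = length xs"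
    unfolding xs_def ys_def using card_symmetric_set[OF RA(1) symA] card_symmetric_set[OF RB(1) symB] RA(2) RB(2)
    by simp
  moreover have "odd (card {y\<in>set ys. xs ! i \<le> y \<and> y < xs ! Suc i})" if i: "Suc i < length xs" for i
  proof -
    have "xs ! i \<in> set xs" "xs ! Suc i \<in> set xs" "xs ! i < xs ! Suc i"
      using i sorted(1) by (auto simp: sorted_wrt_nth_less)
    then have ab: "xs ! i \<in> RA" "xs ! Suc i \<in> RA" "0 < xs ! i" "xs ! i < xs ! Suc i"
      unfolding set_xs by auto
    moreover have "\<not> (xs ! i < r \<and> r < xs ! Suc i)" if "r \<in> RA" for r
      using sorted_wrt_nth_Suc_no_between[OF sorted(1) i, of r] that ab(3) unfolding set_xs by auto
    moreover have "degree B = n"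
      using G(2) unfolding G.monic_orth_def by simp
    ultimately have "xs ! i \<notin> RB" "odd (card {r\<in>RB. xs ! i < r \<and> r < xs ! Suc i})"
      using odd_roots_between_consecutive_pos_roots[OF A RA(3,1) symA(2) RB(3,1) _ _ orth] False by auto
    moreover have "{y\<in>set ys. xs ! i \<le> y \<and> y < xs ! Suc i} = {r\<in>RB. xs ! i < r \<and> r < xs ! Suc i}"
      unfolding set_ys using ab(3) \<open>xs ! i \<notin> RB\<close> by (auto simp: order.order_iff_strict)
    ultimately show ?thesis
      by simp
  qed
  ultimately have "interlace xs ys"
    using sorted by (intro interlace_if_odd_between)
  then show ?thesis
    unfolding xs_def ys_def RA(3) RB(3) using RA(1) RB(1) by (simp add: pos_zeros_roots_poly)
qed

end

section \<open>The Freud and the discrete Sobolev functional\<close>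

interpretation freud: symmetric_positive_functional freud_integral
  by unfold_locales (simp_all add: freud_integral_add freud_integral_smult freud_integral_pos freud_integral_reflect)

definition sobolev_integral :: "real \<Rightarrow> real poly \<Rightarrow> real" where
  "sobolev_integral lam p = freud_integral p + lam * poly p 0"

lemma sobolev_ip_eq: "sobolev_ip lam p q = sobolev_integral lam (p * q)"
  unfolding sobolev_ip_def sobolev_integral_def by (simp add: freud_ip_eq)

lemma symmetric_positive_functional_sobolev_integral:
  assumes "0 \<le> lam"
  shows "symmetric_positive_functional (sobolev_integral lam)"
proof
  fix p q :: "real poly" and c :: real
  show "sobolev_integral lam (p + q) = sobolev_integral lam p + sobolev_integral lam q"
    unfolding sobolev_integral_def by (simp add: freud_integral_add algebra_simps)
  show "sobolev_integral lam (smult c p) = c * sobolev_integral lam p"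
    unfolding sobolev_integral_def by (simp add: freud_integral_smult algebra_simps)
  show "sobolev_integral lam (pcompose p [:0, -1:]) = sobolev_integral lam p"
    unfolding sobolev_integral_def by (simp add: freud_integral_reflect poly_pcompose)
next
  fix p :: "real poly"
  assume "\<And>x. 0 \<le> poly p x" "p \<noteq> 0"
  then show "0 < sobolev_integral lam p"
    unfolding sobolev_integral_def using freud_integral_pos[of p] assms
    by (simp add: add_pos_nonneg)
qed

context
  fixes lam :: real
  assumes lam: "0 \<le> lam"
begin

interpretation sobolev: symmetric_positive_functional "sobolev_integral lam"
  using lam by (rule symmetric_positive_functional_sobolev_integral)

text \<open>An odd orthogonal polynomial vanishes at 0, where the two inner products differ.\<close>
lemma sobolev_monic_orth_odd:
  assumes Q: "sobolev.monic_orth n Q" and "odd n"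
  shows "freud.monic_orth n Q"
proof -
  have "poly Q 0 = 0"
    using sobolev.monic_orth_parity[OF Q, of 0] \<open>odd n\<close> by simp
  then show ?thesis
    using Q unfolding sobolev.monic_orth_def freud.monic_orth_def sobolev_integral_def by auto
qed

lemma sobolev_freud_orth_x:
  assumes P: "freud.monic_orth n P" and Q: "sobolev.monic_orth n Q"
    and "2 \<le> n" "degree s \<le> n - 2"
  shows "freud_integral ((Q - P) * ([:0, 1:] * s)) = 0"
proof -
  have "degree ([:0, 1:] * s) < n"
    using degree_mult_le[of "[:0, 1::real:]" s] assms(3,4) by simp
  then have "freud_integral (P * ([:0, 1:] * s)) = 0" "sobolev_integral lam (Q * ([:0, 1:] * s)) = 0"
    using P Q unfolding freud.monic_orth_def sobolev.monic_orth_def by blast+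
  moreover have "poly (Q * ([:0, 1:] * s)) 0 = 0"
    by simp
  ultimately show ?thesis
    unfolding sobolev_integral_def by (simp only: left_diff_distrib freud.F_diff)
qed

end

theorem mainTheorem5:
  fixes lam1 :: real and P Q :: "nat \<Rightarrow> real poly"
  assumes "lam1 \<ge> 0"
    and "monic_OPS freud_ip P"
    and "monic_OPS (sobolev_ip lam1) Q"
  shows "(\<forall>n. \<forall>z::complex. poly (map_poly complex_of_real (Q n)) z = 0 \<longrightarrow>
              Im z = 0 \<and> order z (map_poly complex_of_real (Q n)) = 1)
       \<and> (\<forall>n\<ge>3. interlace (pos_zeros (P n)) (pos_zeros (Q n)))"
proof -
  interpret sobolev: symmetric_positive_functional "sobolev_integral lam1"
    using assms(1) by (rule symmetric_positive_functional_sobolev_integral)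
  have P: "freud.monic_orth n (P n)" for n
    using assms(2) unfolding freud_ip_eq[abs_def] freud.monic_OPS_iff_monic_orth by blast
  have Q: "sobolev.monic_orth n (Q n)" for n
    using assms(3) unfolding sobolev_ip_eq[abs_def] sobolev.monic_OPS_iff_monic_orth by blast
  have "interlace (pos_zeros (P n)) (pos_zeros (Q n))" if "3 \<le> n" for n
  proof (cases "even n")
    case True
    show ?thesis
      using sobolev_freud_orth_x[OF assms(1) P Q] \<open>3 \<le> n\<close>
      by (intro freud.pos_zeros_interlace[OF P True sobolev.symmetric_positive_functional_axioms Q]) auto
  next
    case False
    then have "P n = Q n"
      using freud.monic_orth_unique[OF P sobolev_monic_orth_odd[OF assms(1) Q]] by blast
    then show ?thesis
      by (simp add: interlace_refl pos_zeros_def)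
  qed
  then show ?thesis
    using sobolev.monic_orth_complex_roots[OF Q] by blast
qed

end
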